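(* Let $M=(W,\bm{\Box},V)$ be a transitive neighborhood model and $\Sigma$ a set of formulas closed under subformulas. Then the transitive filtration $M^{T}_f=(W_f,\bm{\Box}^{T}_f,V_f)$ of $M$ through $\Sigma$ is transitive: $\bm{\Box}^{T}_fX\subseteq\bm{\Box}^{T}_f\bm{\Box}^{T}_fX$ for all $X\subseteq W_f$.
   Context: A neighborhood model is $M=(W,\bm{\Box},V)$ with $W\neq\varnothing$, $\bm{\Box}:\mathcal P(W)\to\mathcal P(W)$, $V:Var\to\mathcal P(W)$; truth sets: $|p|_M=V(p)$, $|\neg\varphi|_M=W\setminus|\varphi|_M$, $|\varphi\wedge\psi|_M=|\varphi|_M\cap|\psi|_M$, $|\Box\varphi|_M=\bm{\Box}|\varphi|_M$. $M$ is transitive if $\bm{\Box}X\subseteq\bm{\Box}\bm{\Box}X$ for all $X\subseteq W$. For $\Sigma$ closed under subformulas, $w\sim v$ iff $w,v$ satisfy the same formulas of $\Sigma$; $\widetilde w$ is the class of $w$, $W_f=\{\widetilde w:w\in W\}$, $\widetilde X=\{\widetilde w:w\in X\}$, $V_f(p)=\widetilde{|p|}_M$. The minimal filtration has $\bm{\Box}^{-}_fX=\widetilde{|\Box\varphi|}_M$ if $X=\widetilde{|\varphi|}_M$ for some formula $\Box\varphi\in\Sigma$, and $\bm{\Box}^{-}_fX=\varnothing$ otherwise. For a function $\bm{\Box}':\mathcal P(U)\to\mathcal P(U)$, $\widehat{\bm{\Box}'}X=X$ if $X=\bm{\Box}'Y$ for some $Y\subseteq U$, and $\varnothing$ otherwise.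 The transitive filtration is $M^{T}_f=(W_f,\bm{\Box}^{T}_f,V_f)$ with $\bm{\Box}^{T}_fX=\bm{\Box}^{-}_fX\cup\widehat{\bm{\Box}^{-}_f}X$. *)

theory Defs
  imports Main
begin

datatype 'v fm = Var 'v | Neg "'v fm" | Conj "'v fm" "'v fm" | Box "'v fm"

definition nbhd_model :: "'w set \<Rightarrow> ('w set \<Rightarrow> 'w set) \<Rightarrow> ('v \<Rightarrow> 'w set) \<Rightarrow> bool" where
  "nbhd_model W bx V \<longleftrightarrow> W \<noteq> {} \<and> (\<forall>X. X \<subseteq> W \<longrightarrow> bx X \<subseteq> W) \<and> (\<forall>p. V p \<subseteq> W)"

fun truth :: "'w set \<Rightarrow> ('w set \<Rightarrow> 'w set) \<Rightarrow> ('v \<Rightarrow> 'w set) \<Rightarrow> 'v fm \<Rightarrow> 'w set" where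
  "truth W bx V (Var p) = V p"
| "truth W bx V (Neg \<phi>) = W - truth W bx V \<phi>"
| "truth W bx V (Conj \<phi> \<psi>) = truth W bx V \<phi> \<inter> truth W bx V \<psi>"
| "truth W bx V (Box \<phi>) = bx (truth W bx V \<phi>)"

definition transitive_model :: "'w set \<Rightarrow> ('w set \<Rightarrow> 'w set) \<Rightarrow> bool" where
  "transitive_model W bx \<longleftrightarrow> (\<forall>X. X \<subseteq> W \<longrightarrow> bx X \<subseteq> bx (bx X))"

fun subformulas :: "'v fm \<Rightarrow> 'v fm set" where
  "subformulas (Var p) = {Var p}"
| "subformulas (Neg \<phi>) = insert (Neg \<phi>) (subformulas \<phi>)"
| "subformulas (Conj \<phi> \<psi>) = insert (Conj \<phi> \<psi>) (subformulas \<phi> \<union> subformulas \<psi>)"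
| "subformulas (Box \<phi>) = insert (Box \<phi>) (subformulas \<phi>)"

definition subformula_closed :: "'v fm set \<Rightarrow> bool" where
  "subformula_closed \<Sigma> \<longleftrightarrow> (\<forall>\<phi>\<in>\<Sigma>. subformulas \<phi> \<subseteq> \<Sigma>)"

definition cls :: "'w set \<Rightarrow> ('w set \<Rightarrow> 'w set) \<Rightarrow> ('v \<Rightarrow> 'w set) \<Rightarrow> 'v fm set \<Rightarrow> 'w \<Rightarrow> 'w set" where
  "cls W bx V \<Sigma> w = {v \<in> W. \<forall>\<phi>\<in>\<Sigma>. (w \<in> truth W bx V \<phi>) = (v \<in> truth W bx V \<phi>)}"

definition Wf :: "'w set \<Rightarrow> ('w set \<Rightarrow> 'w set) \<Rightarrow> ('v \<Rightarrow> 'w set) \<Rightarrow> 'v fm set \<Rightarrow> 'w set set" where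
  "Wf W bx V \<Sigma> = cls W bx V \<Sigma> ` W"

definition Vf :: "'w set \<Rightarrow> ('w set \<Rightarrow> 'w set) \<Rightarrow> ('v \<Rightarrow> 'w set) \<Rightarrow> 'v fm set \<Rightarrow> 'v \<Rightarrow> 'w set set" where
  "Vf W bx V \<Sigma> p = cls W bx V \<Sigma> ` V p"

definition box_min :: "'w set \<Rightarrow> ('w set \<Rightarrow> 'w set) \<Rightarrow> ('v \<Rightarrow> 'w set) \<Rightarrow> 'v fm set \<Rightarrow> 'w set set \<Rightarrow> 'w set set" where
  "box_min W bx V \<Sigma> X =
     (if \<exists>\<phi>. Box \<phi> \<in> \<Sigma> \<and> X = cls W bx V \<Sigma> ` truth W bx V \<phi>
      then cls W bx V \<Sigma> ` truth W bx V (Box (SOME \<phi>. Box \<phi> \<in> \<Sigma> \<and> X = cls W bx V \<Sigma> ` truth W bx V \<phi>))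
      else {})"

definition hat :: "'a set \<Rightarrow> ('a set \<Rightarrow> 'a set) \<Rightarrow> 'a set \<Rightarrow> 'a set" where
  "hat U b X = (if \<exists>Y. Y \<subseteq> U \<and> X = b Y then X else {})"

definition box_trans :: "'w set \<Rightarrow> ('w set \<Rightarrow> 'w set) \<Rightarrow> ('v \<Rightarrow> 'w set) \<Rightarrow> 'v fm set \<Rightarrow> 'w set set \<Rightarrow> 'w set set" where
  "box_trans W bx V \<Sigma> X = box_min W bx V \<Sigma> X \<union> hat (Wf W bx V \<Sigma>) (box_min W bx V \<Sigma>) X"

end

theory Submission
  imports Defs
begin

text \<open>
  Since truth sets of formulas in \<open>\<Sigma>\<close> are unions of classes, the minimal filtration \<open>B\<close> is
  well defined on them, and it is transitive wherever it is nonempty: if \<open>B (B Y) \<noteq> {}\<close>, then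
  \<open>B Y\<close> is the image of \<open>|\<box>\<chi>|\<close> and also of \<open>|\<psi>|\<close> for some \<open>\<box>\<psi> \<in> \<Sigma>\<close>, so \<open>|\<psi>| = |\<box>\<chi>|\<close> and
  \<open>B (B Y)\<close> is the image of \<open>|\<box>\<box>\<chi>| \<supseteq> |\<box>\<chi>|\<close>. For \<open>T X = B X \<union> hat B X\<close> this leaves only two
  possibilities, \<open>T X = B X\<close> or \<open>T X = X\<close>, and in both \<open>T X \<subseteq> T (T X)\<close>, because \<open>hat B\<close>
  fixes every value of \<open>B\<close>.
\<close>

lemma hat_image:
  assumes "X \<subseteq> U"
  shows "hat U b (b X) = b X"
  using assms unfolding hat_def by auto

lemma union_hat_transitive:
  assumes b_transitive: "\<And>Y. Y \<subseteq> U \<Longrightarrow> b (b Y) \<noteq> {} \<Longrightarrow> b Y \<subseteq> b (b Y)"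
    and "X \<subseteq> U"
  shows "b X \<union> hat U b X \<subseteq> b (b X \<union> hat U b X) \<union> hat U b (b X \<union> hat U b X)"
proof -
  have "b X \<union> hat U b X = b X \<or> b X \<union> hat U b X = X"
  proof (cases "\<exists>Y. Y \<subseteq> U \<and> X = b Y")
    case True
    then obtain Y where "Y \<subseteq> U" "X = b Y" by blast
    with b_transitive have "b X = {} \<or> X \<subseteq> b X" by blast
    with True show ?thesis unfolding hat_def by auto
  next
    case False
    then show ?thesis unfolding hat_def by auto
  qed
  then show ?thesis
    using hat_image[OF \<open>X \<subseteq> U\<close>, of b] by auto
qed

lemma truth_subset:
  assumes "nbhd_model W bx V"
  shows "truth W bx V \<phi> \<subseteq> W"
  using assms by (induction \<phi>) (auto simp: nbhd_model_def)

lemma subformula_closed_Box: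
  assumes "subformula_closed \<Sigma>" "Box \<phi> \<in> \<Sigma>"
  shows "\<phi> \<in> \<Sigma>"
proof -
  have "\<phi> \<in> subformulas \<phi>"
    by (cases \<phi>) auto
  with assms show ?thesis
    unfolding subformula_closed_def by force
qed

lemma truth_saturated:
  assumes "nbhd_model W bx V" "\<phi> \<in> \<Sigma>"
  shows "truth W bx V \<phi> = {w \<in> W. cls W bx V \<Sigma> w \<in> cls W bx V \<Sigma> ` truth W bx V \<phi>}"
proof
  show "truth W bx V \<phi> \<subseteq> {w \<in> W. cls W bx V \<Sigma> w \<in> cls W bx V \<Sigma> ` truth W bx V \<phi>}"
    using truth_subset[OF assms(1)] by auto
next
  show "{w \<in> W. cls W bx V \<Sigma> w \<in> cls W bx V \<Sigma> ` truth W bx V \<phi>} \<subseteq> truth W bx V \<phi>"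
  proof clarify
    fix w v
    assume "w \<in> W" "v \<in> truth W bx V \<phi>" "cls W bx V \<Sigma> w = cls W bx V \<Sigma> v"
    moreover have "w \<in> cls W bx V \<Sigma> w"
      using \<open>w \<in> W\<close> by (simp add: cls_def)
    ultimately show "w \<in> truth W bx V \<phi>"
      using \<open>\<phi> \<in> \<Sigma>\<close> by (auto simp: cls_def)
  qed
qed

lemma truth_eq_if_cls_image_eq:
  assumes "nbhd_model W bx V" "\<phi> \<in> \<Sigma>" "\<psi> \<in> \<Sigma>"
    and "cls W bx V \<Sigma> ` truth W bx V \<phi> = cls W bx V \<Sigma> ` truth W bx V \<psi>"
  shows "truth W bx V \<phi> = truth W bx V \<psi>"
proof -
  have "truth W bx V \<phi> = {w \<in> W. cls W bx V \<Sigma> w \<in> cls W bx V \<Sigma> ` truth W bx V \<phi>}"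
    using assms(1,2) by (rule truth_saturated)
  also have "\<dots> = {w \<in> W. cls W bx V \<Sigma> w \<in> cls W bx V \<Sigma> ` truth W bx V \<psi>}"
    unfolding assms(4) ..
  also have "\<dots> = truth W bx V \<psi>"
    using assms(1,3) by (rule truth_saturated[symmetric])
  finally show ?thesis .
qed

lemma box_min_eq_empty:
  assumes "\<nexists>\<phi>. Box \<phi> \<in> \<Sigma> \<and> X = cls W bx V \<Sigma> ` truth W bx V \<phi>"
  shows "box_min W bx V \<Sigma> X = {}"
  unfolding box_min_def using assms by (rule if_not_P)

lemma box_min_cls_image:
  assumes "nbhd_model W bx V" "subformula_closed \<Sigma>" "Box \<phi> \<in> \<Sigma>"
  shows "box_min W bx V \<Sigma> (cls W bx V \<Sigma> ` truth W bx V \<phi>)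
           = cls W bx V \<Sigma> ` truth W bx V (Box \<phi>)"
proof -
  let ?P = "\<lambda>\<psi>. Box \<psi> \<in> \<Sigma> \<and> cls W bx V \<Sigma> ` truth W bx V \<phi> = cls W bx V \<Sigma> ` truth W bx V \<psi>"
  define \<psi> where "\<psi> = (SOME \<psi>. ?P \<psi>)"
  have "?P \<phi>"
    using assms(3) by simp
  then have "?P \<psi>"
    unfolding \<psi>_def by (rule someI)
  then have same_truth: "truth W bx V \<phi> = truth W bx V \<psi>"
    using truth_eq_if_cls_image_eq[OF assms(1) subformula_closed_Box[OF assms(2,3)]
        subformula_closed_Box[OF assms(2)]]
    by blast
  have "box_min W bx V \<Sigma> (cls W bx V \<Sigma> ` truth W bx V \<phi>)
          = cls W bx V \<Sigma> ` truth W bx V (Box \<psi>)"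
    unfolding box_min_def \<psi>_def by (rule if_P) (use \<open>?P \<phi>\<close> in blast)
  also have "\<dots> = cls W bx V \<Sigma> ` truth W bx V (Box \<phi>)"
    using same_truth by simp
  finally show ?thesis .
qed

lemma box_min_transitive:
  assumes "nbhd_model W bx V" "transitive_model W bx" "subformula_closed \<Sigma>"
    and "box_min W bx V \<Sigma> (box_min W bx V \<Sigma> Y) \<noteq> {}"
  shows "box_min W bx V \<Sigma> Y \<subseteq> box_min W bx V \<Sigma> (box_min W bx V \<Sigma> Y)"
proof (cases "\<exists>\<chi>. Box \<chi> \<in> \<Sigma> \<and> Y = cls W bx V \<Sigma> ` truth W bx V \<chi>")
  case True
  then obtain \<chi> where \<chi>: "Box \<chi> \<in> \<Sigma>" "Y = cls W bx V \<Sigma> ` truth W bx V \<chi>"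
    by blast
  have BY: "box_min W bx V \<Sigma> Y = cls W bx V \<Sigma> ` bx (truth W bx V \<chi>)"
    using box_min_cls_image[OF assms(1,3) \<chi>(1)] \<chi>(2) by simp
  obtain \<psi> where \<psi>: "Box \<psi> \<in> \<Sigma>" "box_min W bx V \<Sigma> Y = cls W bx V \<Sigma> ` truth W bx V \<psi>"
    using assms(4) box_min_eq_empty[where X = "box_min W bx V \<Sigma> Y"] by blast
  have "cls W bx V \<Sigma> ` truth W bx V \<psi> = cls W bx V \<Sigma> ` truth W bx V (Box \<chi>)"
    using \<psi>(2) BY by simp
  then have "truth W bx V \<psi> = truth W bx V (Box \<chi>)"
    by (rule truth_eq_if_cls_image_eq[OF assms(1) subformula_closed_Box[OF assms(3) \<psi>(1)] \<chi>(1)])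
  then have BBY:
    "box_min W bx V \<Sigma> (box_min W bx V \<Sigma> Y) = cls W bx V \<Sigma> ` bx (bx (truth W bx V \<chi>))"
    using box_min_cls_image[OF assms(1,3) \<psi>(1)] unfolding \<psi>(2) by simp
  note BY
  also have "cls W bx V \<Sigma> ` bx (truth W bx V \<chi>) \<subseteq> cls W bx V \<Sigma> ` bx (bx (truth W bx V \<chi>))"
    using assms(2) truth_subset[OF assms(1)] unfolding transitive_model_def by (intro image_mono) blast
  also note BBY[symmetric]
  finally show ?thesis .
next
  case False
  then have "box_min W bx V \<Sigma> Y = {}"
    by (rule box_min_eq_empty)
  then show ?thesis
    by simp
qed

theorem mainTheorem7:
  fixes W :: "'w set" and bx :: "'w set \<Rightarrow> 'w set" and V :: "'v \<Rightarrow> 'w set" and \<Sigma> :: "'v fm set"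
  assumes "nbhd_model W bx V"
    and "transitive_model W bx"
    and "subformula_closed \<Sigma>"
  shows "\<forall>X. X \<subseteq> Wf W bx V \<Sigma> \<longrightarrow>
           box_trans W bx V \<Sigma> X \<subseteq> box_trans W bx V \<Sigma> (box_trans W bx V \<Sigma> X)"
proof (intro allI impI)
  fix X
  assume "X \<subseteq> Wf W bx V \<Sigma>"
  with box_min_transitive[OF assms]
  show "box_trans W bx V \<Sigma> X \<subseteq> box_trans W bx V \<Sigma> (box_trans W bx V \<Sigma> X)"
    unfolding box_trans_def by (rule union_hat_transitive)
qed

end
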